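(* Let $q,q',n$ be integers with $q'\ge 2q+1$, $q>1$ and $n>1$. Let $S$ be an $\mathcal{OS}_q(n)$ of period $m$ with ring sequence $[s_0,\ldots,s_{m-1}]$ where $s_0=0$. For $x\in\mathbb{Z}_q$ let $x'$ denote the class in $\mathbb{Z}_{q'}$ of the integer in $\{0,\ldots,q-1\}$ representing $x$. Define $t_i=(-1)^{i+m-1}s_i'$ if $s_i'\neq0$ and $t_i=(-1)^{i+m-1}q$ if $s_i'=0$ ($0\le i\le m-1$). Let $U$ be the periodic sequence over $\mathbb{Z}_{q'}$ with ring sequence \[[s_0',\ldots,s_{m-1}',\,-s_0',\ldots,-s_{m-1}',\,t_0,\ldots,t_{m-1},\,-t_0,\ldots,-t_{m-1}].\] Then $U$ is an $\mathcal{SOS}_{q'}(n)$ of period $4m$ with $w_{q'}(U)=0$.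
   Context: For a periodic sequence $S=(s_i)$ write $\mathbf{s}_n(i)=(s_i,\ldots,s_{i+n-1})$; $\mathbf{u}^R$ is the reverse of a tuple and $-\mathbf{u}$ its termwise negative. An $n$-window sequence of period $m$ satisfies $\mathbf{s}_n(i)=\mathbf{s}_n(j)\Rightarrow i\equiv j\pmod m$. An $\mathcal{OS}_q(n)$ is a $q$-ary $n$-window sequence with $\mathbf{s}_n(i)\neq\mathbf{s}_n(j)^R$ for all $i,j$; an $\mathcal{SOS}_q(n)$ is an $\mathcal{OS}_q(n)$ with also $\mathbf{s}_n(i)\neq-\mathbf{s}_n(j)^R$ for all $i,j$. The ring sequence of a sequence of period $m$ is one period. The weight $w(U)$ is the integer sum of one period with terms taken in $\{0,\ldots,q'-1\}$; $w_{q'}(U)=w(U)\bmod q'$. *)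

theory Defs
  imports Main
begin

text \<open>A q-ary periodic sequence is a function nat => int with values in {0..q-1}
  (representatives of Z_q). Negation in Z_q is (-x) mod q.\<close>

definition window :: "(nat \<Rightarrow> int) \<Rightarrow> nat \<Rightarrow> nat \<Rightarrow> int list" where
  "window s n i = map (\<lambda>k. s (i + k)) [0..<n]"

definition periodic :: "(nat \<Rightarrow> int) \<Rightarrow> nat \<Rightarrow> bool" where
  "periodic s m \<longleftrightarrow> m > 0 \<and> (\<forall>i. s (i + m) = s i)"

definition q_ary :: "int \<Rightarrow> (nat \<Rightarrow> int) \<Rightarrow> bool" where
  "q_ary q s \<longleftrightarrow> (\<forall>i. 0 \<le> s i \<and> s i < q)"

definition window_seq :: "nat \<Rightarrow> nat \<Rightarrow> (nat \<Rightarrow> int) \<Rightarrow> bool" where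
  "window_seq n m s \<longleftrightarrow> periodic s m \<and>
     (\<forall>i j. window s n i = window s n j \<longrightarrow> i mod m = j mod m)"

definition neg_tuple :: "int \<Rightarrow> int list \<Rightarrow> int list" where
  "neg_tuple q u = map (\<lambda>x. (- x) mod q) u"

definition is_OS :: "int \<Rightarrow> nat \<Rightarrow> nat \<Rightarrow> (nat \<Rightarrow> int) \<Rightarrow> bool" where
  "is_OS q n m s \<longleftrightarrow> q_ary q s \<and> window_seq n m s \<and>
     (\<forall>i j. window s n i \<noteq> rev (window s n j))"

definition is_SOS :: "int \<Rightarrow> nat \<Rightarrow> nat \<Rightarrow> (nat \<Rightarrow> int) \<Rightarrow> bool" where
  "is_SOS q n m s \<longleftrightarrow> is_OS q n m s \<and>
     (\<forall>i j. window s n i \<noteq> neg_tuple q (rev (window s n j)))"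

definition weight_mod :: "int \<Rightarrow> nat \<Rightarrow> (nat \<Rightarrow> int) \<Rightarrow> int" where
  "weight_mod q m s = (\<Sum>i<m. s i) mod q"

definition cor_t :: "int \<Rightarrow> int \<Rightarrow> nat \<Rightarrow> (nat \<Rightarrow> int) \<Rightarrow> nat \<Rightarrow> int" where
  "cor_t q q' m s i =
     (if s i mod q' \<noteq> 0 then ((-1) ^ (i + m - 1) * s i) mod q'
      else ((-1) ^ (i + m - 1) * q) mod q')"

definition cor_U :: "int \<Rightarrow> int \<Rightarrow> nat \<Rightarrow> (nat \<Rightarrow> int) \<Rightarrow> nat \<Rightarrow> int" where
  "cor_U q q' m s i =
     (let j = i mod (4 * m); k = j mod m in
      if j < m then s k mod q'
      else if j < 2 * m then (- s k) mod q'
      else if j < 3 * m then cor_t q q' m s k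
      else (- cor_t q q' m s k) mod q')"

end

theory Submission
  imports Defs
begin

(* Every term of U is the residue mod q' of an integer in [-q, q]: U is the reduction of the
   integer sequence u with ring sequence [s, -s, t, -t], where t_i = (-1)^(i+m-1) s_i, or
   (-1)^(i+m-1) q when s_i = 0.  As q' > 2q, reduction mod q' is injective on [-q, q], so
   coincidences of windows of U, plain, reversed or negated and reversed, are coincidences of
   windows of u, and |u_i| mod q = s_i turns them into coincidences of windows of S.  This rules
   out the reversed ones and shows that equal windows of U start at positions congruent mod m.
   Two consecutive positions x, x + 1 with u agreeing at shift m must both carry s = 0, and at
   shift 2m they would need t = s at two consecutive columns; both use that the sign of t
   alternates inside a period and ends with +1, and that s_0 = 0.  So a window agreeing with its
   shift by m (or 3m) is a zero window of S, a palindrome, and shift 2m is impossible.  The weight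
   vanishes because one period of u sums to 0. *)

lemma periodic_mod:
  assumes "periodic f p"
  shows "f (i mod p) = f i"
proof -
  have "f (j + k * p) = f j" for j k
  proof (induction k)
    case (Suc k)
    have "j + Suc k * p = (j + k * p) + p" by simp
    then show ?case using assms Suc.IH unfolding periodic_def by metis
  qed simp
  then show ?thesis
    by (metis mod_div_mult_eq add.commute)
qed

lemma window_mod_period:
  assumes "periodic f p"
  shows "window f n (i mod p) = window f n i"
  unfolding window_def by (metis periodic_mod[OF assms] mod_add_left_eq)

lemma nth_window: "r < n \<Longrightarrow> window f n i ! r = f (i + r)"
  by (simp add: window_def)

lemma OS_no_constant_window:
  assumes "is_OS q n m s"
  shows "\<exists>r<n. s (i + r) \<noteq> c"
proof (rule ccontr)
  assume "\<not> (\<exists>r<n. s (i + r) \<noteq> c)"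
  then have "window s n i = replicate n c"
    by (simp add: window_def list_eq_iff_nth_eq)
  then show False
    using assms unfolding is_OS_def by (metis rev_replicate)
qed

lemma inj_on_mod_small: "inj_on (\<lambda>w::int. w mod q') {w. 2 * \<bar>w\<bar> < q'}"
proof (rule inj_onI)
  fix v w :: int
  assume "v \<in> {w. 2 * \<bar>w\<bar> < q'}" "w \<in> {w. 2 * \<bar>w\<bar> < q'}" "v mod q' = w mod q'"
  then have "\<bar>v - w\<bar> < q'" "q' dvd v - w"
    by (auto simp: mod_eq_dvd_iff)
  then show "v = w"
    using dvd_imp_le_int[of "v - w" q'] by force
qed

lemma window_mod_small_eq_iff:
  fixes u :: "nat \<Rightarrow> int"
  assumes U: "\<And>x. U x = u x mod q'" and small: "\<And>x. 2 * \<bar>u x\<bar> < q'"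
  shows "window U n i = window U n j \<longleftrightarrow> window u n i = window u n j"
    and "window U n i = rev (window U n j) \<longleftrightarrow> window u n i = rev (window u n j)"
    and "window U n i = neg_tuple q' (rev (window U n j)) \<longleftrightarrow>
      window u n i = map uminus (rev (window u n j))"
proof -
  let ?red = "\<lambda>w::int. w mod q'" and ?B = "{w. 2 * \<bar>w\<bar> < q'}"
  have inj: "inj_on ?red (set xs \<union> set ys)" if "set xs \<subseteq> ?B" "set ys \<subseteq> ?B" for xs ys
    using inj_on_subset[OF inj_on_mod_small] that by blast
  have win: "window U n k = map ?red (window u n k)"
    and small_win: "set (window u n k) \<subseteq> ?B" for k
    using U small by (auto simp: window_def)
  have neg: "neg_tuple q' (map ?red xs) = map ?red (map uminus xs)" for xs
    by (simp add: neg_tuple_def mod_minus_eq)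
  show "window U n i = window U n j \<longleftrightarrow> window u n i = window u n j"
    using inj[OF small_win small_win] by (simp add: win inj_on_map_eq_map)
  show "window U n i = rev (window U n j) \<longleftrightarrow> window u n i = rev (window u n j)"
    using inj[OF small_win, of "rev (window u n j)"] small_win[of j]
    by (simp add: win inj_on_map_eq_map rev_map)
  have neg_win: "neg_tuple q' (rev (window U n j)) = map ?red (map uminus (rev (window u n j)))"
    by (simp only: win rev_map neg)
  have "set (map uminus (rev (window u n j))) \<subseteq> ?B"
    using small_win[of j] by auto
  from inj_on_map_eq_map[OF inj[OF small_win this]]
  show "window U n i = neg_tuple q' (rev (window U n j)) \<longleftrightarrow>
      window u n i = map uminus (rev (window u n j))"
    by (subst neg_win) (simp only: win)
qed

definition t_lift :: "int \<Rightarrow> nat \<Rightarrow> (nat \<Rightarrow> int) \<Rightarrow> nat \<Rightarrow> int" where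
  "t_lift q m s i = (-1) ^ (i + m - 1) * (if s i = 0 then q else s i)"

definition U_lift :: "int \<Rightarrow> nat \<Rightarrow> (nat \<Rightarrow> int) \<Rightarrow> nat \<Rightarrow> int" where
  "U_lift q m s i =
     (let j = i mod (4 * m); k = j mod m in
      if j < m then s k else if j < 2 * m then - s k
      else if j < 3 * m then t_lift q m s k else - t_lift q m s k)"

lemma cor_U_eq_U_lift_mod:
  assumes "q_ary q s" "q < q'"
  shows "cor_U q q' m s i = U_lift q m s i mod q'"
proof -
  have s_mod: "s k mod q' = s k" for k
    using assms unfolding q_ary_def by (meson mod_pos_pos_trivial order.strict_trans)
  have "cor_t q q' m s k = t_lift q m s k mod q'" for k
    by (simp add: cor_t_def t_lift_def s_mod)
  then show ?thesis
    by (simp add: cor_U_def U_lift_def Let_def s_mod mod_minus_eq)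
qed

lemma abs_t_lift: "\<bar>t_lift q m s i\<bar> = (if s i = 0 then \<bar>q\<bar> else \<bar>s i\<bar>)"
  by (simp add: t_lift_def abs_mult)

lemma abs_U_lift_le:
  assumes "q_ary q s"
  shows "\<bar>U_lift q m s i\<bar> \<le> q"
  using assms by (auto simp: U_lift_def Let_def abs_t_lift q_ary_def less_imp_le)

lemma abs_U_lift_mod:
  assumes "q_ary q s" "periodic s m"
  shows "\<bar>U_lift q m s i\<bar> mod q = s i"
proof -
  have "\<bar>U_lift q m s i\<bar> mod q = s (i mod (4 * m) mod m)"
    using assms(1) by (auto simp: U_lift_def Let_def abs_t_lift q_ary_def)
  also have "\<dots> = s i"
    by (simp add: mod_mod_cancel periodic_mod[OF assms(2)])
  finally show ?thesis .
qed

lemma periodic_U_lift: "0 < m \<Longrightarrow> periodic (U_lift q m s) (4 * m)"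
  by (simp add: periodic_def U_lift_def)

lemma U_lift_block:
  assumes "c < m"
  shows "U_lift q m s (b * m + c) =
    (if b mod 4 = 0 then s c else if b mod 4 = 1 then - s c
     else if b mod 4 = 2 then t_lift q m s c else - t_lift q m s c)"
proof -
  define d where "d = b mod 4"
  have "(b * m + c) mod (m * 4) = m * ((b * m + c) div m mod 4) + (b * m + c) mod m"
    by (rule mod_mult2_eq)
  then have j: "(b * m + c) mod (4 * m) = d * m + c"
    using assms by (simp add: d_def mult.commute)
  have "d = 0 \<or> d = 1 \<or> d = 2 \<or> d = 3"
    unfolding d_def by linarith
  then show ?thesis
    using assms by (elim disjE) (simp_all add: U_lift_def Let_def j flip: d_def)
qed

lemma sum_U_lift: "(\<Sum>i<4 * m. U_lift q m s i) = 0"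
proof -
  let ?u = "U_lift q m s"
  have "(\<Sum>i<4 * m. ?u i) = (\<Sum>b<4. \<Sum>i\<in>{b * m..<b * m + m}. ?u i)"
    by (rule sum.nat_group[symmetric])
  also have "\<dots> = (\<Sum>b<4. \<Sum>c<m. ?u (b * m + c))"
    by (simp add: sum.atLeastLessThan_shift_0 atLeast0LessThan)
  also have "\<dots> = (\<Sum>c<m. \<Sum>b<4. ?u (b * m + c))"
    by (rule sum.swap)
  also have "\<dots> = 0"
  proof (rule sum.neutral, rule ballI)
    fix c assume "c \<in> {..<m}"
    then show "(\<Sum>b<4. ?u (b * m + c)) = 0"
      by (simp add: lessThan_nat_numeral U_lift_block)
  qed
  finally show ?thesis .
qed

lemma window_eq_map_abs_mod_U_lift:
  assumes "is_OS q n m s"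
  shows "window s n i = map (\<lambda>w. \<bar>w\<bar> mod q) (window (U_lift q m s) n i)"
  using assms abs_U_lift_mod by (simp add: window_def is_OS_def window_seq_def)

lemma U_lift_window_ne_rev:
  assumes "is_OS q n m s"
  shows "window (U_lift q m s) n i \<noteq> rev (window (U_lift q m s) n j)"
    and "window (U_lift q m s) n i \<noteq> map uminus (rev (window (U_lift q m s) n j))"
proof -
  have "window s n i \<noteq> rev (window s n j)"
    using assms by (simp add: is_OS_def)
  then show "window (U_lift q m s) n i \<noteq> rev (window (U_lift q m s) n j)"
    and "window (U_lift q m s) n i \<noteq> map uminus (rev (window (U_lift q m s) n j))"
    by (auto simp: window_eq_map_abs_mod_U_lift[OF assms] rev_map)
qed

lemma q_ary_pos: "q_ary q s \<Longrightarrow> 0 < q"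
  unfolding q_ary_def by (metis le_less_trans)

lemma t_lift_eq_iff:
  assumes "0 \<le> s c" "0 < q"
  shows "t_lift q m s c = s c \<longleftrightarrow> s c \<noteq> 0 \<and> even (c + m - 1)"
  using assms by (cases "even (c + m - 1)") (auto simp: t_lift_def)

lemma t_lift_eq_neg_iff:
  assumes "0 \<le> s c" "0 < q"
  shows "t_lift q m s c = - s c \<longleftrightarrow> s c \<noteq> 0 \<and> odd (c + m - 1)"
  using assms by (cases "even (c + m - 1)") (auto simp: t_lift_def)

lemma t_lift_nonzero:
  assumes "0 \<le> s c" "0 < q"
  shows "t_lift q m s c \<noteq> 0"
  using assms by (simp add: t_lift_def)

lemma U_lift_shift_m:
  assumes "q_ary q s" "c < m"
    and "U_lift q m s (b * m + c) = U_lift q m s ((b + 1) * m + c)"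
  shows "(b mod 4 = 0 \<and> s c = 0) \<or> (odd b \<and> s c \<noteq> 0 \<and> odd (c + m - 1))"
proof -
  have s: "0 \<le> s c" and q: "0 < q"
    using assms(1) q_ary_pos by (auto simp: q_ary_def)
  have b1: "(b + 1) mod 4 = (b mod 4 + 1) mod 4"
    by (simp add: mod_Suc_eq)
  have odd_b: "odd b \<longleftrightarrow> odd (b mod 4)"
    by (simp add: even_mod_4_div_2 odd_iff_mod_2_eq_one mod_mod_cancel[of 2 4, simplified])
  note eq = assms(3)[unfolded U_lift_block[OF assms(2)] b1]
  have "b mod 4 = 0 \<or> b mod 4 = 1 \<or> b mod 4 = 2 \<or> b mod 4 = 3"
    by linarith
  then show ?thesis
    using eq odd_b t_lift_eq_neg_iff[of s c q m, OF s q] t_lift_nonzero[of s c q m, OF s q]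
    by (elim disjE) auto
qed

lemma U_lift_shift_2m:
  assumes "q_ary q s" "c < m"
    and "U_lift q m s (b * m + c) = U_lift q m s ((b + 2) * m + c)"
  shows "s c \<noteq> 0 \<and> even (c + m - 1)"
proof -
  have s: "0 \<le> s c" and q: "0 < q"
    using assms(1) q_ary_pos by (auto simp: q_ary_def)
  have b2: "(b + 2) mod 4 = (b mod 4 + 2) mod 4"
    by (rule mod_add_left_eq [symmetric])
  note eq = assms(3)[unfolded U_lift_block[OF assms(2)] b2]
  have "b mod 4 = 0 \<or> b mod 4 = 1 \<or> b mod 4 = 2 \<or> b mod 4 = 3"
    by linarith
  then show ?thesis
    using eq t_lift_eq_iff[of s c q m, OF s q] by (elim disjE) auto
qed

lemma U_lift_shift_m_pair:
  assumes "q_ary q s" "periodic s m" "s 0 = 0"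
    and "U_lift q m s x = U_lift q m s (x + m)"
    and "U_lift q m s (x + 1) = U_lift q m s (x + 1 + m)"
  shows "s x = 0 \<and> s (x + 1) = 0"
proof -
  define b c where "b = x div m" and "c = x mod m"
  have "0 < m"
    using assms(2) by (simp add: periodic_def)
  then have c: "c < m" and x: "x = b * m + c"
    by (simp_all add: b_def c_def)
  have "(b + 1) * m + c = x + m"
    by (simp add: x)
  note at_x = U_lift_shift_m[OF assms(1) c assms(4)[folded this, unfolded x]]
  have s_x: "s x = s c"
    using periodic_mod[OF assms(2)] c_def by simp
  consider (inner) "c + 1 < m" | (last) "c + 1 = m"
    using c by linarith
  then show ?thesis
  proof cases
    case inner
    have "b * m + (c + 1) = x + 1" "(b + 1) * m + (c + 1) = x + 1 + m"
      by (simp_all add: x)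
    note at_x1 = U_lift_shift_m[OF assms(1) inner assms(5)[folded this]]
    have "c + 1 + m - 1 = Suc (c + m - 1)"
      using \<open>0 < m\<close> by simp
    moreover have "s (x + 1) = s (c + 1)"
      using periodic_mod[OF assms(2), of "x + 1"] inner x by simp
    ultimately show ?thesis
      using at_x at_x1 s_x by auto
  next
    case last
    then have "s c = 0"
      using at_x by auto
    moreover have "s (x + 1) = s 0"
      using periodic_mod[OF assms(2), of "x + 1"] last x by (simp add: add_ac)
    ultimately show ?thesis
      using s_x assms(3) by simp
  qed
qed

lemma U_lift_shift_2m_pair:
  assumes "q_ary q s" "periodic s m" "s 0 = 0"
    and "U_lift q m s x = U_lift q m s (x + 2 * m)"
    and "U_lift q m s (x + 1) = U_lift q m s (x + 1 + 2 * m)"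
  shows False
proof -
  define b c where "b = x div m" and "c = x mod m"
  have "0 < m"
    using assms(2) by (simp add: periodic_def)
  then have c: "c < m" and x: "x = b * m + c"
    by (simp_all add: b_def c_def)
  have "(b + 2) * m + c = x + 2 * m"
    by (simp add: x distrib_right)
  note at_x = U_lift_shift_2m[OF assms(1) c assms(4)[folded this, unfolded x]]
  consider (inner) "c + 1 < m" | (last) "c + 1 = m"
    using c by linarith
  then show ?thesis
  proof cases
    case inner
    have "b * m + (c + 1) = x + 1" "(b + 2) * m + (c + 1) = x + 1 + 2 * m"
      by (simp_all add: x distrib_right)
    note at_x1 = U_lift_shift_2m[OF assms(1) inner assms(5)[folded this]]
    have "c + 1 + m - 1 = Suc (c + m - 1)"
      using \<open>0 < m\<close> by simp
    then show ?thesis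
      using at_x at_x1 by simp
  next
    case last
    have "(b + 1) * m + 0 = x + 1" "(b + 1 + 2) * m + 0 = x + 1 + 2 * m"
      using last by (simp_all add: x distrib_right)
    note at_x1 = U_lift_shift_2m[OF assms(1) \<open>0 < m\<close> assms(5)[folded this]]
    then show ?thesis
      using assms(3) by simp
  qed
qed

lemma U_lift_window_shift_m:
  assumes "is_OS q n m s" "s 0 = 0" "1 < n"
  shows "window (U_lift q m s) n x \<noteq> window (U_lift q m s) n (x + m)"
proof
  assume eq: "window (U_lift q m s) n x = window (U_lift q m s) n (x + m)"
  have s: "q_ary q s" "periodic s m"
    using assms(1) by (simp_all add: is_OS_def window_seq_def)
  have step: "U_lift q m s (x + r) = U_lift q m s (x + r + m)" if "r < n" for r
    using arg_cong[OF eq, of "\<lambda>w. w ! r"] that by (simp add: nth_window add_ac)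
  have "s (x + r) = 0" if "r < n" for r
  proof (cases "r + 1 < n")
    case True
    then show ?thesis
      using U_lift_shift_m_pair[OF s assms(2) step[OF that]] step[OF True] by (simp add: add_ac)
  next
    case False
    then have "r = (r - 1) + 1" "r - 1 < n"
      using that assms(3) by auto
    then show ?thesis
      using U_lift_shift_m_pair[OF s assms(2) step[of "r - 1"]] step[of r] that
      by (metis add.assoc)
  qed
  then show False
    using OS_no_constant_window[OF assms(1)] by blast
qed

lemma U_lift_window_shift_2m:
  assumes "is_OS q n m s" "s 0 = 0" "1 < n"
  shows "window (U_lift q m s) n x \<noteq> window (U_lift q m s) n (x + 2 * m)"
proof
  assume eq: "window (U_lift q m s) n x = window (U_lift q m s) n (x + 2 * m)"
  have s: "q_ary q s" "periodic s m"
    using assms(1) by (simp_all add: is_OS_def window_seq_def)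
  have "U_lift q m s (x + r) = U_lift q m s (x + r + 2 * m)" if "r < n" for r
    using arg_cong[OF eq, of "\<lambda>w. w ! r"] that by (simp add: nth_window add_ac)
  from this[of 0] this[of 1] show False
    using U_lift_shift_2m_pair[OF s assms(2)] assms(3) by simp
qed

lemma U_lift_window_eq_imp_mod_eq:
  assumes "is_OS q n m s" "s 0 = 0" "1 < n"
    and "window (U_lift q m s) n i = window (U_lift q m s) n j"
  shows "i mod (4 * m) = j mod (4 * m)"
proof -
  let ?u = "U_lift q m s"
  have "0 < m"
    using assms(1) by (simp add: is_OS_def window_seq_def periodic_def)
  have shift_4m: "window ?u n (x + 4 * m) = window ?u n x" for x
    using window_mod_period[OF periodic_U_lift[OF \<open>0 < m\<close>]] by (metis mod_add_self2)
  have key: "a = b"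
    if le: "a \<le> b" and lt: "b < 4 * m" and mod: "a mod m = b mod m"
      and win: "window ?u n a = window ?u n b" for a b
  proof -
    obtain k where b: "b = a + m * k"
      using mod_eq_nat2E[OF mod le] by blast
    then have "k < 4"
      using lt by (metis le_add2 le_less_trans mult.commute mult_less_cancel2)
    then consider (zero) "k = 0" | (one) "k = 1" | (two) "k = 2" | (three) "k = 3"
      by linarith
    then show ?thesis
    proof cases
      case zero
      then show ?thesis using b by simp
    next
      case one
      then show ?thesis using win b U_lift_window_shift_m[OF assms(1-3), of a] by simp
    next
      case two
      then show ?thesis
        using win b U_lift_window_shift_2m[OF assms(1-3), of a] by (simp add: mult.commute)
    next
      case three
      then have "window ?u n b = window ?u n (b + m)"
        using win shift_4m[of a] b by (simp add: add_ac)
      then show ?thesis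
        using U_lift_window_shift_m[OF assms(1-3)] by blast
    qed
  qed
  have "window s n i = window s n j"
    using assms(4) by (simp add: window_eq_map_abs_mod_U_lift[OF assms(1)])
  then have "i mod m = j mod m"
    using assms(1) unfolding is_OS_def window_seq_def by blast
  then have "i mod (4 * m) mod m = j mod (4 * m) mod m"
    by (simp add: mod_mod_cancel)
  moreover have "window ?u n (i mod (4 * m)) = window ?u n (j mod (4 * m))"
    using assms(4) by (simp add: window_mod_period[OF periodic_U_lift[OF \<open>0 < m\<close>]])
  moreover have "i mod (4 * m) < 4 * m" "j mod (4 * m) < 4 * m"
    using \<open>0 < m\<close> by simp_all
  ultimately show ?thesis
    using key[of "i mod (4 * m)" "j mod (4 * m)"] key[of "j mod (4 * m)" "i mod (4 * m)"]
    by (cases "i mod (4 * m) \<le> j mod (4 * m)") auto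
qed

theorem corollary3p18:
  fixes q q' :: int and n m :: nat and s :: "nat \<Rightarrow> int"
  assumes "q' \<ge> 2 * q + 1" and "q > 1" and "n > 1"
    and "is_OS q n m s" and "s 0 = 0"
  shows "is_SOS q' n (4 * m) (cor_U q q' m s) \<and> weight_mod q' (4 * m) (cor_U q q' m s) = 0"
proof -
  let ?u = "U_lift q m s" and ?U = "cor_U q q' m s"
  have s: "q_ary q s" "periodic s m"
    using assms(4) by (simp_all add: is_OS_def window_seq_def)
  have U: "?U i = ?u i mod q'" for i
    using cor_U_eq_U_lift_mod[OF s(1)] assms(1,2) by simp
  have small: "2 * \<bar>?u i\<bar> < q'" for i
    using abs_U_lift_le[OF s(1), of m i] assms(1) by linarith
  note windows = window_mod_small_eq_iff[of ?U ?u q', OF U small]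
  have "periodic ?U (4 * m)"
    using periodic_U_lift[of m q s] s(2) by (simp add: periodic_def U)
  moreover have "q_ary q' ?U"
    using assms(1,2) by (simp add: q_ary_def U)
  moreover have "weight_mod q' (4 * m) ?U = 0"
    using sum_U_lift[of q m s] by (simp add: weight_mod_def U mod_sum_eq)
  moreover have "window ?U n i = window ?U n j \<Longrightarrow> i mod (4 * m) = j mod (4 * m)" for i j
    using windows(1) U_lift_window_eq_imp_mod_eq[OF assms(4,5,3)] by blast
  moreover have "window ?U n i \<noteq> rev (window ?U n j)" for i j
    using windows(2) U_lift_window_ne_rev(1)[OF assms(4)] by blast
  moreover have "window ?U n i \<noteq> neg_tuple q' (rev (window ?U n j))" for i j
    using windows(3) U_lift_window_ne_rev(2)[OF assms(4)] by blast
  ultimately show ?thesis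
    unfolding is_SOS_def is_OS_def window_seq_def by blast
qed

end
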